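(* Let $i\in\mathbb{N}_0$ and let $\alpha,\beta\in\mathbb{C}$. Then $$F^{1:1;2}_{1:0;1}\left[\begin{matrix}\alpha: & \tfrac12\beta+2+i\,; & \tfrac12\beta-2-i,\ \tfrac12\alpha+1\,;\\ \beta: & -\,; & \tfrac12\alpha\,;\end{matrix}\ \tfrac12,\ \tfrac12\right] =\frac{(-1)^i\,2^{\alpha+3+i}}{\beta\,(i+1)!}\sum_{r=0}^{i}(-1)^r\binom{i}{r}\frac{\Gamma\!\left(\frac14\beta+\frac{r+1}{2}\right)}{\Gamma\!\left(\frac14\beta-i+\frac{r-1}{2}\right)}$$ and $$F^{1:1;2}_{1:0;1}\left[\begin{matrix}\alpha: & \tfrac12\beta+2-i\,; & \tfrac12\beta-2+i,\ \tfrac12\alpha+1\,;\\ \beta: & -\,; & \tfrac12\alpha\,;\end{matrix}\ \tfrac12,\ \tfrac12\right] =\frac{2^{\alpha+3-i}}{\beta}\sum_{r=0}^{i}\binom{i}{r}\frac{\Gamma\!\left(\frac14\beta+\frac{r+1}{2}\right)}{\Gamma\!\left(\frac14\beta+\frac{r-1}{2}\right)}.$$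
   Context: For $\lambda\in\mathbb{C}$ and $n\in\mathbb{N}_0$, $(\lambda)_0=1$ and $(\lambda)_n=\lambda(\lambda+1)\cdots(\lambda+n-1)$; $\Gamma$ is Euler's Gamma function and $\binom{i}{r}$ the binomial coefficient. The (generalized) Kampé de Fériet function is defined by $$F^{H:A;B}_{G:C;D}\left[\begin{matrix}(h_H): & (a_A)\,; & (b_B)\,;\\ (g_G): & (c_C)\,; & (d_D)\,;\end{matrix}\ x,\ y\right]=\sum_{m=0}^\infty\sum_{n=0}^\infty\frac{\prod_{j=1}^H(h_j)_{m+n}\prod_{j=1}^A(a_j)_m\prod_{j=1}^B(b_j)_n}{\prod_{j=1}^G(g_j)_{m+n}\prod_{j=1}^C(c_j)_m\prod_{j=1}^D(d_j)_n}\frac{x^m}{m!}\frac{y^n}{n!},$$ where a dash "$-$" denotes an empty list of parameters (empty products equal $1$). Parameters are tacitly assumed to be such that the double series converges, no denominator parameter is a non-positive integer, and all Gamma values appearing are finite. *)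

theory Defs
  imports "HOL-Analysis.Analysis"
begin

text \<open>Generalized Kampe de Feriet function with parameter lists
  (h_H), (a_A), (b_B) in the numerator and (g_G), (c_C), (d_D) in the denominator.\<close>
definition KdF ::
  "complex list \<Rightarrow> complex list \<Rightarrow> complex list \<Rightarrow>
   complex list \<Rightarrow> complex list \<Rightarrow> complex list \<Rightarrow> complex \<Rightarrow> complex \<Rightarrow> complex" where
  "KdF hs as bs gs cs ds x y =
     (\<Sum>\<^sub>\<infinity>(m, n)\<in>UNIV.
        (prod_list (map (\<lambda>p. pochhammer p (m + n)) hs)
         * prod_list (map (\<lambda>p. pochhammer p m) as)
         * prod_list (map (\<lambda>p. pochhammer p n) bs))
        / (prod_list (map (\<lambda>p. pochhammer p (m + n)) gs)
         * prod_list (map (\<lambda>p. pochhammer p m) cs)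
         * prod_list (map (\<lambda>p. pochhammer p n) ds))
        * (x ^ m / fact m) * (y ^ n / fact n))"

end

theory Submission
  imports Defs "HOL-Real_Asymp.Real_Asymp"
begin

text \<open>Since (\<alpha>/2 + 1)_n / (\<alpha>/2)_n = 1 + 2n/\<alpha>, summing the left-hand sides along the diagonals
  m + n = N with the Chu-Vandermonde identity (plain and weighted by n) turns them, whenever the
  two remaining parameters c, e satisfy c + e = \<beta>, into the series
  \<Sum>_N (\<alpha>)_N / (N! 2^N) (1 + 2Ne/(\<alpha>\<beta>)), which the binomial series evaluates to 2^\<alpha> (\<beta> + 2e)/\<beta>.
  On the right-hand sides the Gamma quotients are Pochhammer symbols: the alternating sum is an
  i-th finite difference of a Pochhammer polynomial of degree i + 1, hence linear in \<beta>, and the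
  other sum is a binomial sum of linear terms. Both sides equal 2^(\<alpha>+1) (\<beta> \<mp> i - 2)/\<beta>.\<close>

lemma zero_le_pochhammer: "0 \<le> x \<Longrightarrow> 0 \<le> pochhammer x n"
  for x :: "'a :: linordered_semidom"
  by (simp add: pochhammer_prod prod_nonneg)

lemma norm_pochhammer_le: "norm (pochhammer z n) \<le> pochhammer (norm z) n"
  for z :: "'a :: real_normed_field"
proof (induction n)
  case (Suc n)
  have "norm (z + of_nat n) \<le> norm z + of_nat n"
    using norm_triangle_ineq[of z "of_nat n"] by simp
  with Suc show ?case
    by (simp add: pochhammer_rec' norm_mult mult_mono pochhammer_pos)
qed simp

lemma pochhammer_plus1_divide:
  fixes z :: "'a :: field_char_0"
  assumes "z \<notin> \<int>\<^sub>\<le>\<^sub>0"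
  shows "pochhammer (z + 1) n / pochhammer z n = 1 + of_nat n / z"
proof -
  have "z \<noteq> 0" and "pochhammer z n \<noteq> 0"
    using assms by (auto dest: pochhammer_eq_0_imp_nonpos_Int)
  moreover have "z * pochhammer (z + 1) n = (z + of_nat n) * pochhammer z n"
    by (metis pochhammer_rec pochhammer_rec')
  ultimately show ?thesis by (simp add: field_simps)
qed

lemma pochhammer_binomial_sum_weighted:
  fixes x y :: "'a :: comm_ring_1"
  shows "(x + y) * (\<Sum>k\<le>N. of_nat k * of_nat (N choose k) * pochhammer x k * pochhammer y (N - k))
         = of_nat N * x * pochhammer (x + y) N"
proof (cases N)
  case (Suc M)
  have "(\<Sum>k\<le>Suc M. of_nat k * of_nat (Suc M choose k) * pochhammer x k * pochhammer y (Suc M - k))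
      = (\<Sum>j\<le>M. of_nat (Suc j * (Suc M choose Suc j)) * pochhammer x (Suc j) * pochhammer y (M - j))"
    by (subst sum.atMost_Suc_shift) (simp del: binomial_Suc_Suc of_nat_Suc mult_Suc)
  also have "\<dots> = (\<Sum>j\<le>M. of_nat (Suc M) * x
                     * (of_nat (M choose j) * pochhammer (x + 1) j * pochhammer y (M - j)))"
    by (simp only: Suc_times_binomial) (simp add: pochhammer_rec algebra_simps)
  also have "\<dots> = of_nat (Suc M) * x * pochhammer (x + 1 + y) M"
    unfolding pochhammer_binomial_sum[of "x + 1" y M] by (simp add: sum_distrib_left ac_simps)
  finally show ?thesis
    using Suc by (simp add: pochhammer_rec algebra_simps)
qed simp

lemma summable_ratio_test_tendsto:
  fixes f :: "nat \<Rightarrow> 'a :: banach"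
  assumes "eventually (\<lambda>n. norm (f (Suc n)) \<le> r n * norm (f n)) sequentially"
    and "r \<longlonglongrightarrow> l" and "l < 1"
  shows "summable f"
proof -
  have "eventually (\<lambda>n. r n < (1 + l) / 2) sequentially"
    using \<open>r \<longlonglongrightarrow> l\<close> \<open>l < 1\<close> by (intro order_tendstoD) auto
  with assms(1) have "eventually (\<lambda>n. norm (f (Suc n)) \<le> (1 + l) / 2 * norm (f n)) sequentially"
    by eventually_elim (metis less_imp_le mult_right_mono norm_ge_zero order_trans)
  then obtain N where "\<And>n. n \<ge> N \<Longrightarrow> norm (f (Suc n)) \<le> (1 + l) / 2 * norm (f n)"
    by (auto simp: eventually_at_top_linorder)
  with \<open>l < 1\<close> show ?thesis by (intro summable_ratio_test[where c = "(1 + l) / 2"]) auto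
qed

lemma summable_pochhammer_ratio_majorant:
  fixes a s :: real and \<beta> :: complex
  assumes "a > 0" and "s \<ge> 0" and "\<beta> \<notin> \<int>\<^sub>\<le>\<^sub>0"
  shows "summable (\<lambda>N. pochhammer a N * pochhammer s N * (a + 2 * real N)
                        / (a * norm (pochhammer \<beta> N) * fact N * 2 ^ N))"
    (is "summable ?M")
proof (rule summable_ratio_test_tendsto)
  define r where "r N = (a + real N) * (s + real N) * (a + 2 * real N + 2)
                        / (2 * (real N - norm \<beta>) * (real N + 1) * (a + 2 * real N))" for N
  show "r \<longlonglongrightarrow> 1 / 2"
    unfolding r_def by real_asymp
  have nonneg: "?M N \<ge> 0" for N
    using assms(1,2) by (simp add: zero_le_pochhammer)
  have "norm (?M (Suc N)) \<le> r N * norm (?M N)" if "norm \<beta> < real N" for N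
  proof -
    have "pochhammer \<beta> N \<noteq> 0"
      using assms(3) by (auto dest: pochhammer_eq_0_imp_nonpos_Int)
    have "real N - norm \<beta> \<le> norm (\<beta> + of_nat N)"
      using norm_triangle_ineq2[of "of_nat N" "- \<beta>"] by (simp add: add.commute)
    then have "norm (\<beta> + of_nat N) > 0"
      using that by linarith
    have "?M (Suc N) = (a + real N) * (s + real N) * (a + 2 * real N + 2)
                       / (2 * norm (\<beta> + of_nat N) * (real N + 1) * (a + 2 * real N)) * ?M N"
      using assms(1) \<open>norm (\<beta> + of_nat N) > 0\<close> \<open>pochhammer \<beta> N \<noteq> 0\<close>
      by (simp add: pochhammer_rec'[of a] pochhammer_rec'[of s] pochhammer_rec'[of \<beta>]
          norm_mult del: pochhammer_Suc) (simp add: field_simps)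
    also have "\<dots> \<le> r N * ?M N"
      unfolding r_def using assms(1,2) nonneg[of N] \<open>real N - norm \<beta> \<le> norm (\<beta> + of_nat N)\<close> that
      by (intro mult_right_mono divide_left_mono) (auto intro!: mult_pos_pos)
    finally show ?thesis
      using nonneg[of N] nonneg[of "Suc N"] by (simp only: real_norm_def abs_of_nonneg)
  qed
  moreover have "eventually (\<lambda>N. norm \<beta> < real N) sequentially"
    by real_asymp
  ultimately show "eventually (\<lambda>N. norm (?M (Suc N)) \<le> r N * norm (?M N)) sequentially"
    by (auto elim: eventually_mono)
qed simp

lemma bij_betw_nat_pairs_diagonals:
  "bij_betw (\<lambda>(N, k). (N - k, k)) (SIGMA N:UNIV. {..N}) (UNIV :: (nat \<times> nat) set)"
  by (rule bij_betw_byWitness[where f' = "\<lambda>(m, n). (m + n, n)"]) auto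

lemma abs_summable_on_nat_pairs_by_diagonals:
  fixes f :: "nat \<times> nat \<Rightarrow> 'a :: real_normed_vector"
  assumes "summable (\<lambda>N. \<Sum>k\<le>N. norm (f (N - k, k)))"
  shows "(\<lambda>p. norm (f p)) summable_on UNIV"
proof -
  have "(\<lambda>N. \<Sum>k\<le>N. norm (f (N - k, k))) summable_on UNIV"
    using assms by (intro norm_summable_imp_summable_on) (simp add: sum_nonneg)
  then have "(\<lambda>(N, k). norm (f (N - k, k))) summable_on (SIGMA N:UNIV. {..N})"
    by (intro summable_on_SigmaI[where g = "\<lambda>N. \<Sum>k\<le>N. norm (f (N - k, k))"]) auto
  then show ?thesis
    using summable_on_reindex_bij_betw[OF bij_betw_nat_pairs_diagonals, of "\<lambda>p. norm (f p)"]
    by (simp add: case_prod_unfold)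
qed

lemma sums_infsum_nat_pairs_by_diagonals:
  fixes f :: "nat \<times> nat \<Rightarrow> complex"
  assumes "f summable_on UNIV"
  shows "(\<lambda>N. \<Sum>k\<le>N. f (N - k, k)) sums infsum f UNIV"
proof -
  have "((\<lambda>(N, k). f (N - k, k)) has_sum infsum f UNIV) (SIGMA N:UNIV. {..N})"
    using has_sum_reindex_bij_betw[OF bij_betw_nat_pairs_diagonals, of f] assms
    by (simp add: case_prod_unfold)
  then have "((\<lambda>N. \<Sum>k\<le>N. f (N - k, k)) has_sum infsum f UNIV) UNIV"
    by (rule has_sum_Sigma'[where f = "\<lambda>(N, k). f (N - k, k)"]) (auto intro: has_sum_finite)
  then show ?thesis by (rule has_sum_imp_sums)
qed

lemma pochhammer_series_sums:
  fixes a z :: complex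
  assumes "norm z < 1"
  shows "(\<lambda>n. pochhammer a n / fact n * z ^ n) sums (1 - z) powr (- a)"
proof -
  have "((- a) gchoose n) * (- z) ^ n = ((- 1) ^ n * (- 1) ^ n) * (pochhammer a n / fact n * z ^ n)" for n
    by (simp add: gbinomial_pochhammer power_minus[of z] mult_ac)
  then have "((- a) gchoose n) * (- z) ^ n = pochhammer a n / fact n * z ^ n" for n
    by (simp flip: power_mult_distrib)
  then show ?thesis
    using gen_binomial_complex[of "- z" "- a"] assms by simp
qed

lemma pochhammer_series_sums_weighted:
  fixes a z :: complex
  assumes "norm z < 1"
  shows "(\<lambda>n. of_nat n * (pochhammer a n / fact n * z ^ n)) sums (a * z * (1 - z) powr (- (a + 1)))"
proof (rule sums_Suc_imp)
  have series: "(\<lambda>n. a * z * (pochhammer (a + 1) n / fact n * z ^ n)) sums (a * z * (1 - z) powr (- (a + 1)))"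
    using assms by (intro sums_mult pochhammer_series_sums)
  have shift: "a * z * (pochhammer (a + 1) n / fact n * z ^ n)
      = of_nat (Suc n) * (pochhammer a (Suc n) / fact (Suc n) * z ^ Suc n)" for n
    by (simp add: pochhammer_rec field_simps del: of_nat_Suc)
  show "(\<lambda>n. of_nat (Suc n) * (pochhammer a (Suc n) / fact (Suc n) * z ^ Suc n))
      sums (a * z * (1 - z) powr (- (a + 1)))"
    using series unfolding shift .
qed simp

lemma half_powr_minus: "(1 / 2 :: complex) powr (- a) = 2 powr a"
proof -
  have "(1 / 2 :: complex) powr a * 2 powr a = 1"
    using powr_times_real[of "1 / 2" 2 a] by simp
  then show ?thesis
    by (simp add: powr_minus field_simps)
qed

text \<open>(-1)^i times the i-th forward difference with step h of (\<cdot>)_n at x.\<close>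

definition pochhammer_alt_diff :: "nat \<Rightarrow> nat \<Rightarrow> 'a \<Rightarrow> 'a \<Rightarrow> 'a :: field_char_0" where
  "pochhammer_alt_diff i n h x =
     (\<Sum>r=0..i. (-1) ^ r * of_nat (i choose r) * pochhammer (x + of_nat r * h) n)"

lemma pochhammer_alt_diff_Suc_Suc:
  "pochhammer_alt_diff (Suc i) (Suc n) h x =
     x * pochhammer_alt_diff (Suc i) n h (x + 1)
     - of_nat (Suc i) * h * pochhammer_alt_diff i n h (x + 1 + h)"
proof -
  define P where "P r = pochhammer (x + 1 + of_nat r * h) n" for r
  have "pochhammer_alt_diff (Suc i) (Suc n) h x
      = (\<Sum>r=0..Suc i. (-1) ^ r * of_nat (Suc i choose r) * ((x + of_nat r * h) * P r))"
    unfolding pochhammer_alt_diff_def P_def by (simp add: pochhammer_rec algebra_simps)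
  also have "\<dots> = x * (\<Sum>r=0..Suc i. (-1) ^ r * of_nat (Suc i choose r) * P r)
      + h * (\<Sum>r=0..Suc i. (-1) ^ r * of_nat (r * (Suc i choose r)) * P r)"
    by (simp add: sum_distrib_left sum.distrib[symmetric] algebra_simps)
  also have "(\<Sum>r=0..Suc i. (-1) ^ r * of_nat (Suc i choose r) * P r)
      = pochhammer_alt_diff (Suc i) n h (x + 1)"
    by (simp add: pochhammer_alt_diff_def P_def algebra_simps)
  also have "(\<Sum>r=0..Suc i. (-1) ^ r * of_nat (r * (Suc i choose r)) * P r)
      = (\<Sum>r=0..i. (-1) ^ Suc r * of_nat (Suc r * (Suc i choose Suc r)) * P (Suc r))"
    by (subst sum.atLeast0_atMost_Suc_shift) (simp add: algebra_simps)
  also have "\<dots> = (\<Sum>r=0..i. (-1) ^ Suc r * of_nat (Suc i * (i choose r)) * P (Suc r))"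
    by (simp only: Suc_times_binomial)
  also have "\<dots> = - of_nat (Suc i) * pochhammer_alt_diff i n h (x + 1 + h)"
    by (simp add: pochhammer_alt_diff_def P_def sum_distrib_left algebra_simps)
  finally show ?thesis by (simp add: algebra_simps)
qed

lemma pochhammer_alt_diff_eq_0: "n < i \<Longrightarrow> pochhammer_alt_diff i n h x = 0"
proof (induction n arbitrary: i x)
  case 0
  then show ?case
    using choose_alternating_sum[of i] by (simp add: pochhammer_alt_diff_def atLeast0AtMost)
next
  case (Suc n)
  then obtain j where "i = Suc j" by (cases i) auto
  with Suc show ?case by (simp add: pochhammer_alt_diff_Suc_Suc)
qed

lemma pochhammer_alt_diff_diag: "pochhammer_alt_diff i i h x = (-1) ^ i * fact i * h ^ i"
proof (induction i arbitrary: x)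
  case 0
  then show ?case by (simp add: pochhammer_alt_diff_def)
next
  case (Suc i)
  then show ?case by (simp add: pochhammer_alt_diff_Suc_Suc pochhammer_alt_diff_eq_0)
qed

lemma pochhammer_alt_diff_Suc:
  "pochhammer_alt_diff i (Suc i) h x = (-1) ^ i * fact (Suc i) * h ^ i * (x + of_nat i * (1 + h) / 2)"
proof (induction i arbitrary: x)
  case 0
  then show ?case by (simp add: pochhammer_alt_diff_def)
next
  case (Suc i)
  then show ?case
    by (simp add: pochhammer_alt_diff_Suc_Suc[of i "Suc i"] pochhammer_alt_diff_diag field_simps)
qed

lemma alternating_Gamma_quotient_sum:
  fixes \<beta> :: complex
  assumes "\<And>r. r \<le> i \<Longrightarrow> \<beta> / 4 - of_nat i + (of_nat r - 1) / 2 \<notin> \<int>\<^sub>\<le>\<^sub>0"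
  shows "(\<Sum>r=0..i. (-1) ^ r * of_nat (i choose r) * Gamma (\<beta> / 4 + (of_nat r + 1) / 2)
            / Gamma (\<beta> / 4 - of_nat i + (of_nat r - 1) / 2))
         = (-1) ^ i * fact (Suc i) / 2 ^ i * (\<beta> - of_nat i - 2) / 4"
proof -
  define x where "x = \<beta> / 4 - of_nat i - 1 / 2"
  have "Gamma (\<beta> / 4 + (of_nat r + 1) / 2) / Gamma (\<beta> / 4 - of_nat i + (of_nat r - 1) / 2)
      = pochhammer (x + of_nat r * (1 / 2)) (Suc i)" if "r \<le> i" for r
  proof -
    have "\<beta> / 4 - of_nat i + (of_nat r - 1) / 2 = x + of_nat r * (1 / 2)"
      and "\<beta> / 4 + (of_nat r + 1) / 2 = x + of_nat r * (1 / 2) + of_nat (Suc i)"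
      by (simp_all add: x_def field_simps)
    with assms[OF that] show ?thesis by (simp add: pochhammer_Gamma)
  qed
  then have "(\<Sum>r=0..i. (-1) ^ r * of_nat (i choose r) * Gamma (\<beta> / 4 + (of_nat r + 1) / 2)
                / Gamma (\<beta> / 4 - of_nat i + (of_nat r - 1) / 2))
      = pochhammer_alt_diff i (Suc i) (1 / 2) x"
    unfolding pochhammer_alt_diff_def by (intro sum.cong) (simp_all flip: times_divide_eq_right)
  also have "\<dots> = (-1) ^ i * fact (Suc i) / 2 ^ i * (\<beta> - of_nat i - 2) / 4"
    by (simp add: pochhammer_alt_diff_Suc x_def field_simps)
  finally show ?thesis .
qed

lemma binomial_Gamma_quotient_sum:
  fixes \<beta> :: complex
  assumes "\<And>r. r \<le> i \<Longrightarrow> \<beta> / 4 + (of_nat r - 1) / 2 \<notin> \<int>\<^sub>\<le>\<^sub>0"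
  shows "(\<Sum>r=0..i. of_nat (i choose r) * Gamma (\<beta> / 4 + (of_nat r + 1) / 2)
            / Gamma (\<beta> / 4 + (of_nat r - 1) / 2))
         = 2 ^ i * (\<beta> + of_nat i - 2) / 4"
proof -
  have "of_nat (i choose r) * Gamma (\<beta> / 4 + (of_nat r + 1) / 2) / Gamma (\<beta> / 4 + (of_nat r - 1) / 2)
      = (\<beta> / 4 - 1 / 2) * of_nat (i choose r) + of_nat (r * (i choose r)) / 2" if "r \<le> i" for r
  proof -
    define z where "z = \<beta> / 4 + (of_nat r - 1) / 2"
    have "\<beta> / 4 + (of_nat r + 1) / 2 = z + 1"
      by (simp add: z_def field_simps)
    moreover have "z \<notin> \<int>\<^sub>\<le>\<^sub>0"
      using assms[OF that] by (simp add: z_def)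
    ultimately show ?thesis
      by (simp add: Gamma_plus1 Gamma_eq_zero_iff flip: z_def) (simp add: z_def field_simps)
  qed
  then have "(\<Sum>r=0..i. of_nat (i choose r) * Gamma (\<beta> / 4 + (of_nat r + 1) / 2)
                / Gamma (\<beta> / 4 + (of_nat r - 1) / 2))
      = (\<Sum>r\<le>i. (\<beta> / 4 - 1 / 2) * of_nat (i choose r) + of_nat (r * (i choose r)) / 2)"
    by (simp add: atLeast0AtMost)
  also have "\<dots> = (\<beta> / 4 - 1 / 2) * of_nat (\<Sum>r\<le>i. i choose r) + of_nat (\<Sum>r\<le>i. r * (i choose r)) / 2"
    by (simp only: sum.distrib sum_distrib_left sum_divide_distrib of_nat_sum)
  also have "\<dots> = (\<beta> / 4 - 1 / 2) * 2 ^ i + of_nat (i * 2 ^ (i - 1)) / 2"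
    by (simp only: choose_row_sum choose_linear_sum) simp
  also have "of_nat (i * 2 ^ (i - 1)) / 2 = (of_nat i * 2 ^ i / 4 :: complex)"
    by (cases i) (simp_all add: algebra_simps)
  finally show ?thesis by (simp add: field_simps)
qed

text \<open>The summand of KdF [\<alpha>] [c] [e, \<alpha>/2 + 1] [\<beta>] [] [\<alpha>/2] (1/2) (1/2), with the quotient
  (\<alpha>/2 + 1)_n / (\<alpha>/2)_n already cancelled.\<close>

definition kdf_term :: "complex \<Rightarrow> complex \<Rightarrow> complex \<Rightarrow> complex \<Rightarrow> nat \<times> nat \<Rightarrow> complex" where
  "kdf_term \<alpha> \<beta> c e = (\<lambda>(m, n).
     pochhammer \<alpha> (m + n) / pochhammer \<beta> (m + n) * pochhammer c m * pochhammer e n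
     * (1 + 2 * of_nat n / \<alpha>) / (fact m * fact n * 2 ^ (m + n)))"

lemma KdF_eq_infsum_kdf_term:
  assumes "\<alpha> / 2 \<notin> \<int>\<^sub>\<le>\<^sub>0"
  shows "KdF [\<alpha>] [c] [e, \<alpha> / 2 + 1] [\<beta>] [] [\<alpha> / 2] (1 / 2) (1 / 2) = infsum (kdf_term \<alpha> \<beta> c e) UNIV"
proof -
  have "(case p of (m, n) \<Rightarrow>
          (prod_list (map (\<lambda>p. pochhammer p (m + n)) [\<alpha>])
           * prod_list (map (\<lambda>p. pochhammer p m) [c])
           * prod_list (map (\<lambda>p. pochhammer p n) [e, \<alpha> / 2 + 1]))
          / (prod_list (map (\<lambda>p. pochhammer p (m + n)) [\<beta>])
           * prod_list (map (\<lambda>p. pochhammer p m) [])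
           * prod_list (map (\<lambda>p. pochhammer p n) [\<alpha> / 2]))
          * ((1 / 2) ^ m / fact m) * ((1 / 2) ^ n / fact n))
        = kdf_term \<alpha> \<beta> c e p" for p
  proof (cases p)
    case (Pair m n)
    have "pochhammer (\<alpha> / 2) n \<noteq> 0"
      using assms by (auto dest: pochhammer_eq_0_imp_nonpos_Int)
    moreover have "pochhammer (\<alpha> / 2 + 1) n = pochhammer (\<alpha> / 2) n * (1 + 2 * of_nat n / \<alpha>)"
      using pochhammer_plus1_divide[OF assms, of n] calculation by (simp add: field_simps)
    ultimately show ?thesis
      using Pair by (cases "pochhammer \<beta> (m + n) = 0")
        (simp_all add: kdf_term_def power_add power_one_over field_simps)
  qed
  then show ?thesis
    unfolding KdF_def by (intro infsum_cong)
qed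

lemma kdf_term_diagonal:
  assumes "k \<le> N"
  shows "kdf_term \<alpha> \<beta> c e (N - k, k) = pochhammer \<alpha> N / (pochhammer \<beta> N * fact N * 2 ^ N)
           * (of_nat (N choose k) * pochhammer e k * pochhammer c (N - k) * (1 + 2 * of_nat k / \<alpha>))"
  using assms by (cases "pochhammer \<beta> N = 0") (simp_all add: kdf_term_def binomial_fact field_simps)

lemma kdf_term_diagonal_sum:
  assumes "c + e = \<beta>" and "\<beta> \<notin> \<int>\<^sub>\<le>\<^sub>0"
  shows "(\<Sum>k\<le>N. kdf_term \<alpha> \<beta> c e (N - k, k))
         = pochhammer \<alpha> N / (fact N * 2 ^ N) * (1 + 2 * of_nat N * e / (\<alpha> * \<beta>))"
proof -
  have "\<beta> \<noteq> 0" and "pochhammer \<beta> N \<noteq> 0"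
    using assms(2) by (auto dest: pochhammer_eq_0_imp_nonpos_Int)
  have vandermonde: "(\<Sum>k\<le>N. of_nat (N choose k) * pochhammer e k * pochhammer c (N - k)) = pochhammer \<beta> N"
    using pochhammer_binomial_sum[of e c N] assms(1) by (simp add: add.commute)
  have weighted: "(\<Sum>k\<le>N. of_nat k * of_nat (N choose k) * pochhammer e k * pochhammer c (N - k))
      = of_nat N * e * pochhammer \<beta> N / \<beta>"
    using pochhammer_binomial_sum_weighted[of e c N] assms(1) \<open>\<beta> \<noteq> 0\<close>
    by (simp add: add.commute eq_divide_eq mult.commute)
  have "(\<Sum>k\<le>N. kdf_term \<alpha> \<beta> c e (N - k, k))
      = pochhammer \<alpha> N / (pochhammer \<beta> N * fact N * 2 ^ N)
        * (\<Sum>k\<le>N. of_nat (N choose k) * pochhammer e k * pochhammer c (N - k) * (1 + 2 * of_nat k / \<alpha>))"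
    by (simp add: kdf_term_diagonal sum_distrib_left)
  also have "(\<Sum>k\<le>N. of_nat (N choose k) * pochhammer e k * pochhammer c (N - k) * (1 + 2 * of_nat k / \<alpha>))
      = (\<Sum>k\<le>N. of_nat (N choose k) * pochhammer e k * pochhammer c (N - k))
        + 2 / \<alpha> * (\<Sum>k\<le>N. of_nat k * of_nat (N choose k) * pochhammer e k * pochhammer c (N - k))"
    by (simp add: sum.distrib sum_distrib_left algebra_simps)
  also have "\<dots> = pochhammer \<beta> N * (1 + 2 * of_nat N * e / (\<alpha> * \<beta>))"
    unfolding vandermonde weighted by (simp add: field_simps)
  finally show ?thesis
    using \<open>pochhammer \<beta> N \<noteq> 0\<close> by simp
qed

lemma norm_kdf_term_diagonal_le:
  assumes "k \<le> N"
  shows "norm (kdf_term \<alpha> \<beta> c e (N - k, k))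
         \<le> pochhammer (norm \<alpha>) N / (norm (pochhammer \<beta> N) * fact N * 2 ^ N)
           * (real (N choose k) * pochhammer (norm e) k * pochhammer (norm c) (N - k)
              * (1 + 2 * real N / norm \<alpha>))"
proof -
  have "norm (1 + 2 * of_nat k / \<alpha>) \<le> 1 + 2 * real k / norm \<alpha>"
    using norm_triangle_ineq[of 1 "2 * of_nat k / \<alpha>"] by (simp add: norm_divide)
  also have "\<dots> \<le> 1 + 2 * real N / norm \<alpha>"
    using assms by (simp add: divide_right_mono)
  finally have "norm (1 + 2 * of_nat k / \<alpha>) \<le> 1 + 2 * real N / norm \<alpha>" .
  then show ?thesis
    unfolding kdf_term_diagonal[OF assms] norm_mult norm_divide norm_power
    by (intro mult_mono divide_right_mono norm_pochhammer_le)
      (auto simp: zero_le_pochhammer intro: divide_right_mono norm_pochhammer_le)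
qed

lemma kdf_term_abs_summable:
  assumes "\<alpha> \<noteq> 0" and "\<beta> \<notin> \<int>\<^sub>\<le>\<^sub>0"
  shows "(\<lambda>p. norm (kdf_term \<alpha> \<beta> c e p)) summable_on UNIV"
proof (rule abs_summable_on_nat_pairs_by_diagonals)
  define a where "a = norm \<alpha>"
  define s where "s = norm e + norm c"
  define M where "M N = pochhammer a N * pochhammer s N * (a + 2 * real N)
                        / (a * norm (pochhammer \<beta> N) * fact N * 2 ^ N)" for N
  have "a > 0"
    using assms(1) by (simp add: a_def)
  have "summable M"
    unfolding M_def using \<open>a > 0\<close> assms(2)
    by (intro summable_pochhammer_ratio_majorant) (auto simp: s_def)
  moreover have "norm (\<Sum>k\<le>N. norm (kdf_term \<alpha> \<beta> c e (N - k, k))) \<le> M N" for N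
  proof -
    have "norm (\<Sum>k\<le>N. norm (kdf_term \<alpha> \<beta> c e (N - k, k)))
        = (\<Sum>k\<le>N. norm (kdf_term \<alpha> \<beta> c e (N - k, k)))"
      unfolding real_norm_def by (intro abs_of_nonneg sum_nonneg norm_ge_zero)
    also have "\<dots> \<le> (\<Sum>k\<le>N. pochhammer a N / (norm (pochhammer \<beta> N) * fact N * 2 ^ N)
              * (real (N choose k) * pochhammer (norm e) k * pochhammer (norm c) (N - k)
                 * (1 + 2 * real N / a)))"
      unfolding a_def by (intro sum_mono norm_kdf_term_diagonal_le) simp
    also have "\<dots> = pochhammer a N / (norm (pochhammer \<beta> N) * fact N * 2 ^ N) * (1 + 2 * real N / a)
        * (\<Sum>k\<le>N. real (N choose k) * pochhammer (norm e) k * pochhammer (norm c) (N - k))"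
      by (simp add: sum_distrib_left sum_divide_distrib mult_ac)
    also have "(\<Sum>k\<le>N. real (N choose k) * pochhammer (norm e) k * pochhammer (norm c) (N - k))
        = pochhammer s N"
      by (simp add: s_def pochhammer_binomial_sum)
    also have "pochhammer a N / (norm (pochhammer \<beta> N) * fact N * 2 ^ N) * (1 + 2 * real N / a)
        * pochhammer s N = M N"
      using \<open>a > 0\<close> by (simp add: M_def field_simps)
    finally show ?thesis .
  qed
  ultimately show "summable (\<lambda>N. \<Sum>k\<le>N. norm (kdf_term \<alpha> \<beta> c e (N - k, k)))"
    by (rule summable_comparison_test'[where N = 0])
qed

lemma KdF_closed_form:
  fixes \<alpha> \<beta> c e :: complex
  assumes "\<beta> \<notin> \<int>\<^sub>\<le>\<^sub>0" and "\<alpha> / 2 \<notin> \<int>\<^sub>\<le>\<^sub>0" and "c + e = \<beta>"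
  shows "KdF [\<alpha>] [c] [e, \<alpha> / 2 + 1] [\<beta>] [] [\<alpha> / 2] (1 / 2) (1 / 2) = 2 powr \<alpha> * (\<beta> + 2 * e) / \<beta>"
proof -
  have "\<alpha> \<noteq> 0" and "\<beta> \<noteq> 0"
    using assms(1,2) by auto
  have "kdf_term \<alpha> \<beta> c e summable_on UNIV"
    using kdf_term_abs_summable[OF \<open>\<alpha> \<noteq> 0\<close> assms(1)] by (rule abs_summable_summable)
  then have diagonals: "(\<lambda>N. \<Sum>k\<le>N. kdf_term \<alpha> \<beta> c e (N - k, k)) sums infsum (kdf_term \<alpha> \<beta> c e) UNIV"
    by (rule sums_infsum_nat_pairs_by_diagonals)
  have "(\<lambda>N. pochhammer \<alpha> N / fact N * (1 / 2) ^ N) sums 2 powr \<alpha>"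
    using pochhammer_series_sums[of "1 / 2" \<alpha>] by (simp add: half_powr_minus)
  moreover have "(\<lambda>N. of_nat N * (pochhammer \<alpha> N / fact N * (1 / 2) ^ N)) sums (\<alpha> * 2 powr \<alpha>)"
    using pochhammer_series_sums_weighted[of "1 / 2" \<alpha>] half_powr_minus[of "\<alpha> + 1"]
    by (simp add: powr_add)
  ultimately have "(\<lambda>N. pochhammer \<alpha> N / fact N * (1 / 2) ^ N
      + 2 * e / (\<alpha> * \<beta>) * (of_nat N * (pochhammer \<alpha> N / fact N * (1 / 2) ^ N)))
      sums (2 powr \<alpha> + 2 * e / (\<alpha> * \<beta>) * (\<alpha> * 2 powr \<alpha>))"
    by (intro sums_add sums_mult)
  moreover have "pochhammer \<alpha> N / fact N * (1 / 2) ^ N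
      + 2 * e / (\<alpha> * \<beta>) * (of_nat N * (pochhammer \<alpha> N / fact N * (1 / 2) ^ N))
      = (\<Sum>k\<le>N. kdf_term \<alpha> \<beta> c e (N - k, k))" for N
    using assms(1,3) by (simp add: kdf_term_diagonal_sum field_simps)
  moreover have "2 powr \<alpha> + 2 * e / (\<alpha> * \<beta>) * (\<alpha> * 2 powr \<alpha>) = 2 powr \<alpha> * (\<beta> + 2 * e) / \<beta>"
    using \<open>\<alpha> \<noteq> 0\<close> \<open>\<beta> \<noteq> 0\<close> by (simp add: field_simps)
  ultimately show ?thesis
    using diagonals KdF_eq_infsum_kdf_term[OF assms(2)] by (simp add: sums_iff)
qed

theorem theorem4:
  fixes i :: nat and \<alpha> \<beta> :: complex
  assumes "\<beta> \<notin> \<int>\<^sub>\<le>\<^sub>0" and "\<alpha> / 2 \<notin> \<int>\<^sub>\<le>\<^sub>0"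
    and "\<And>r::nat. r \<le> i \<Longrightarrow> \<beta> / 4 + (of_nat r + 1) / 2 \<notin> \<int>\<^sub>\<le>\<^sub>0"
    and "\<And>r::nat. r \<le> i \<Longrightarrow> \<beta> / 4 - of_nat i + (of_nat r - 1) / 2 \<notin> \<int>\<^sub>\<le>\<^sub>0"
    and "\<And>r::nat. r \<le> i \<Longrightarrow> \<beta> / 4 + (of_nat r - 1) / 2 \<notin> \<int>\<^sub>\<le>\<^sub>0"
  shows "(KdF [\<alpha>] [\<beta>/2 + 2 + of_nat i] [\<beta>/2 - 2 - of_nat i, \<alpha>/2 + 1]
             [\<beta>] [] [\<alpha>/2] (1/2) (1/2)
         = (-1) ^ i * (2::complex) powr (\<alpha> + 3 + of_nat i) / (\<beta> * fact (i + 1))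
           * (\<Sum>r=0..i. (-1) ^ r * of_nat (i choose r)
               * Gamma (\<beta> / 4 + (of_nat r + 1) / 2)
               / Gamma (\<beta> / 4 - of_nat i + (of_nat r - 1) / 2))) \<and>
        (KdF [\<alpha>] [\<beta>/2 + 2 - of_nat i] [\<beta>/2 - 2 + of_nat i, \<alpha>/2 + 1]
             [\<beta>] [] [\<alpha>/2] (1/2) (1/2)
         = (2::complex) powr (\<alpha> + 3 - of_nat i) / \<beta>
           * (\<Sum>r=0..i. of_nat (i choose r)
               * Gamma (\<beta> / 4 + (of_nat r + 1) / 2)
               / Gamma (\<beta> / 4 + (of_nat r - 1) / 2)))"
proof -
  have "\<beta> \<noteq> 0"
    using assms(1) by auto
  have "(-1) ^ i * (-1) ^ i = (1::complex)"
    by (simp flip: power_mult_distrib)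
  moreover have "2 powr (\<alpha> + 3 + of_nat i) = 8 * 2 powr \<alpha> * (2::complex) ^ i"
    and "2 powr (\<alpha> + 3 - of_nat i) = 8 * 2 powr \<alpha> / (2::complex) ^ i"
    by (simp_all add: powr_add powr_diff powr_nat')
  ultimately have
    "(-1) ^ i * 2 powr (\<alpha> + 3 + of_nat i) / (\<beta> * fact (i + 1))
       * ((-1) ^ i * fact (Suc i) / 2 ^ i * (\<beta> - of_nat i - 2) / 4)
     = 2 powr \<alpha> * (\<beta> + 2 * (\<beta>/2 - 2 - of_nat i)) / \<beta>"
    "2 powr (\<alpha> + 3 - of_nat i) / \<beta> * (2 ^ i * (\<beta> + of_nat i - 2) / 4)
     = 2 powr \<alpha> * (\<beta> + 2 * (\<beta>/2 - 2 + of_nat i)) / \<beta>"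
    using \<open>\<beta> \<noteq> 0\<close> by (simp_all add: field_simps del: fact_Suc)
  moreover have "KdF [\<alpha>] [\<beta>/2 + 2 + of_nat i] [\<beta>/2 - 2 - of_nat i, \<alpha>/2 + 1] [\<beta>] [] [\<alpha>/2] (1/2) (1/2)
      = 2 powr \<alpha> * (\<beta> + 2 * (\<beta>/2 - 2 - of_nat i)) / \<beta>"
    and "KdF [\<alpha>] [\<beta>/2 + 2 - of_nat i] [\<beta>/2 - 2 + of_nat i, \<alpha>/2 + 1] [\<beta>] [] [\<alpha>/2] (1/2) (1/2)
      = 2 powr \<alpha> * (\<beta> + 2 * (\<beta>/2 - 2 + of_nat i)) / \<beta>"
    using assms(1,2) by (rule KdF_closed_form; simp)+
  ultimately show ?thesis
    by (simp only: alternating_Gamma_quotient_sum[OF assms(4)] binomial_Gamma_quotient_sum[OF assms(5)])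
qed

end
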